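(* Consider problem (VP) under the standing assumptions at $\bar x\in Q_0$. Let $\bar x$ be a local weak efficient solution of (VP) (in particular, a local efficient solution), and suppose that $L^2(Q;\bar x,u)\subset T^2(Q_0;\bar x,u)$ for every critical direction $u\in\mathcal{C}(\bar x)$. Then there is no pair $(u,v)\in X\times X$ such that $F_i^2(\bar x;u,v)<_{\rm lex}(0,0)$ for all $i\in I$ and $G_j^2(\bar x;u,v)\leqq_{\rm lex}(0,0)$ for all $j\in J(\bar x)$.
   Context: Standing setting: $X$ is a Banach space; $I=\{1,\dots,p\}$, $J=\{1,\dots,m\}$; $f_i,g_j\colon X\to\mathbb{R}$; (VP) minimizes $f=(f_1,\dots,f_p)$ over $Q_0:=\{x\in X: g_j(x)\leqq 0,\ j\in J\}$. $J(\bar x):=\{j\in J: g_j(\bar x)=0\}$. Standing assumptions: $f_i$ ($i\in I$), $g_j$ ($j\in J(\bar x)$) locally Lipschitz at $\bar x$; $g_j$ ($j\notin J(\bar x)$) continuous at $\bar x$. $F^{\circ}(\bar x,u):=\limsup_{x\to\bar x,\,t\downarrow0}\frac{F(x+tu)-F(x)}{t}$; $F^{\circ\circ}(\bar x,u):=\limsup_{t\downarrow0}\frac{F(\bar x+tu)-F(\bar x)-tF^{\circ}(\bar x,u)}{\frac12t^2}$. Lexicographic order on $\mathbb{R}^2$: $a\leqq_{\rm lex}b$ iff $a_1<b_1$ or ($a_1=b_1$, $a_2\leqq b_2$); $a<_{\rm lex}b$ iff $a_1<b_1$ or ($a_1=b_1$, $a_2<b_2$). $F_i^2(\bar x;u,v):=(f_i^{\circ}(\bar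 x,u),\, f_i^{\circ}(\bar x,v)+f_i^{\circ\circ}(\bar x,u))$, $G_j^2(\bar x;u,v):=(g_j^{\circ}(\bar x,u),\, g_j^{\circ}(\bar x,v)+g_j^{\circ\circ}(\bar x,u))$. $Q:=Q_0\cap\{x: f_i(x)\leqq f_i(\bar x),\ i\in I\}$; $L^2(Q;\bar x,u):=\{v: F_i^2(\bar x;u,v)\leqq_{\rm lex}(0,0)\ \forall i\in I,\ G_j^2(\bar x;u,v)\leqq_{\rm lex}(0,0)\ \forall j\in J(\bar x)\}$. $T^2(\Omega;\bar x,u):=\{v: \exists t_k\downarrow0,\ \exists v^k\to v,\ \bar x+t_ku+\frac12t_k^2v^k\in\Omega\ \forall k\}$. Critical direction: $u\in X$ with $f_i^{\circ}(\bar x,u)\leqq0$ for all $i$, $f_i^{\circ}(\bar x,u)=0$ for some $i$, and $g_j^{\circ}(\bar x,u)\leqq0$ for all $j\in J(\bar x)$; $\mathcal{C}(\bar x)$ is the set of these (note $0\in\mathcal{C}(\bar x)$). Local weak efficient solution: there is a neighborhood $U$ of $\bar x$ such that no $x\in U\cap Q_0$ has $f_i(x)<f_i(\bar x)$ for all $i\in I$; local efficient: no $x\in U\cap Q_0$ has $f(x)\leqq f(\bar x)$ componentwise with $f(x)\ne f(\bar x)$. *)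

theory Defs
  imports "HOL-Analysis.Analysis" "HOL-Library.Liminf_Limsup"
begin

text \<open>Under local
Lipschitz continuity it is finite, so we take its real value.\<close>
definition clarke1 :: "('a::real_normed_vector \<Rightarrow> real) \<Rightarrow> 'a \<Rightarrow> 'a \<Rightarrow> real" where
  "clarke1 F xb u = real_of_ereal
     (Limsup (nhds xb \<times>\<^sub>F at_right 0) (\<lambda>(x, t). ereal ((F (x + t *\<^sub>R u) - F x) / t)))"

text \<open>Second-order upper derivative; may be infinite, so kept in ereal.\<close>
definition clarke2 :: "('a::real_normed_vector \<Rightarrow> real) \<Rightarrow> 'a \<Rightarrow> 'a \<Rightarrow> ereal" where
  "clarke2 F xb u = Limsup (at_right 0)
     (\<lambda>t. ereal ((F (xb + t *\<^sub>R u) - F xb - t * clarke1 F xb u) / ((1/2) * t\<^sup>2)))"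

definition lex_le :: "real \<times> ereal \<Rightarrow> real \<times> ereal \<Rightarrow> bool" where
  "lex_le a b \<longleftrightarrow> fst a < fst b \<or> (fst a = fst b \<and> snd a \<le> snd b)"

definition lex_less :: "real \<times> ereal \<Rightarrow> real \<times> ereal \<Rightarrow> bool" where
  "lex_less a b \<longleftrightarrow> fst a < fst b \<or> (fst a = fst b \<and> snd a < snd b)"

definition second_pair :: "('a::real_normed_vector \<Rightarrow> real) \<Rightarrow> 'a \<Rightarrow> 'a \<Rightarrow> 'a \<Rightarrow> real \<times> ereal" where
  "second_pair F xb u v = (clarke1 F xb u, ereal (clarke1 F xb v) + clarke2 F xb u)"

definition locally_lipschitz_at :: "('a::real_normed_vector \<Rightarrow> real) \<Rightarrow> 'a \<Rightarrow> bool" where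
  "locally_lipschitz_at F xb \<longleftrightarrow> (\<exists>K \<delta>. \<delta> > 0 \<and>
     (\<forall>y\<in>ball xb \<delta>. \<forall>z\<in>ball xb \<delta>. \<bar>F y - F z\<bar> \<le> K * norm (y - z)))"

definition feasible_set :: "nat \<Rightarrow> (nat \<Rightarrow> 'a \<Rightarrow> real) \<Rightarrow> 'a set" where
  "feasible_set m g = {x. \<forall>j\<in>{1..m}. g j x \<le> 0}"

definition active_set :: "nat \<Rightarrow> (nat \<Rightarrow> 'a \<Rightarrow> real) \<Rightarrow> 'a \<Rightarrow> nat set" where
  "active_set m g xb = {j\<in>{1..m}. g j xb = 0}"

definition level_set :: "nat \<Rightarrow> nat \<Rightarrow> (nat \<Rightarrow> 'a \<Rightarrow> real) \<Rightarrow> (nat \<Rightarrow> 'a \<Rightarrow> real) \<Rightarrow> 'a \<Rightarrow> 'a set" where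
  "level_set p m f g xb = feasible_set m g \<inter> {x. \<forall>i\<in>{1..p}. f i x \<le> f i xb}"

definition L2 :: "nat \<Rightarrow> nat \<Rightarrow> (nat \<Rightarrow> 'a::real_normed_vector \<Rightarrow> real) \<Rightarrow> (nat \<Rightarrow> 'a \<Rightarrow> real) \<Rightarrow> 'a \<Rightarrow> 'a \<Rightarrow> 'a set" where
  "L2 p m f g xb u = {v. (\<forall>i\<in>{1..p}. lex_le (second_pair (f i) xb u v) (0, 0)) \<and>
                         (\<forall>j\<in>active_set m g xb. lex_le (second_pair (g j) xb u v) (0, 0))}"

definition T2 :: "'a::real_normed_vector set \<Rightarrow> 'a \<Rightarrow> 'a \<Rightarrow> 'a set" where
  "T2 \<Omega> xb u = {v. \<exists>t vs. (\<forall>k. t k > 0) \<and> t \<longlonglongrightarrow> 0 \<and> vs \<longlonglongrightarrow> v \<and>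
       (\<forall>k. xb + t k *\<^sub>R u + ((1/2) * (t k)\<^sup>2) *\<^sub>R vs k \<in> \<Omega>)}"

definition critical_dirs :: "nat \<Rightarrow> nat \<Rightarrow> (nat \<Rightarrow> 'a::real_normed_vector \<Rightarrow> real) \<Rightarrow> (nat \<Rightarrow> 'a \<Rightarrow> real) \<Rightarrow> 'a \<Rightarrow> 'a set" where
  "critical_dirs p m f g xb = {u. (\<forall>i\<in>{1..p}. clarke1 (f i) xb u \<le> 0) \<and>
       (\<exists>i\<in>{1..p}. clarke1 (f i) xb u = 0) \<and>
       (\<forall>j\<in>active_set m g xb. clarke1 (g j) xb u \<le> 0)}"

definition local_weak_efficient :: "nat \<Rightarrow> nat \<Rightarrow> (nat \<Rightarrow> 'a::real_normed_vector \<Rightarrow> real) \<Rightarrow> (nat \<Rightarrow> 'a \<Rightarrow> real) \<Rightarrow> 'a \<Rightarrow> bool" where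
  "local_weak_efficient p m f g xb \<longleftrightarrow> (\<exists>U. open U \<and> xb \<in> U \<and>
     \<not> (\<exists>x\<in>U \<inter> feasible_set m g. \<forall>i\<in>{1..p}. f i x < f i xb))"

end

theory Submission
  imports Defs
begin

text \<open>If some pair \<open>(u, v)\<close> made every \<open>F\<^sub>i\<^sup>2\<close> lexicographically negative, we may assume
\<open>u\<close> critical (otherwise \<open>(0, u)\<close> works), so the constraint qualification yields feasible points
\<open>x\<^sub>k = x\<^sub>b + t\<^sub>k u + t\<^sub>k\<^sup>2/2 v\<^sub>k\<close> with \<open>t\<^sub>k \<down> 0\<close>, \<open>v\<^sub>k \<rightarrow> v\<close>. Along such a curve each \<open>f\<^sub>i\<close>
eventually drops below \<open>f\<^sub>i x\<^sub>b\<close>: when \<open>f\<^sub>i\<^sup>\<circ>(x\<^sub>b, u) < 0\<close> the first-order term wins, and when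
\<open>f\<^sub>i\<^sup>\<circ>(x\<^sub>b, u) = 0\<close> the increments along \<open>u\<close> and then along \<open>t\<^sup>2/2 v\<close> are controlled by
\<open>f\<^sub>i\<^sup>\<circ>\<^sup>\<circ>(x\<^sub>b, u)\<close> and \<open>f\<^sub>i\<^sup>\<circ>(x\<^sub>b, v)\<close>; in both cases the descent is of order \<open>t\<^sup>2\<close> at least,
which absorbs the Lipschitz error \<open>O(t\<^sup>2 \<parallel>v\<^sub>k - v\<parallel>)\<close>. This contradicts local weak efficiency.\<close>

lemma locally_lipschitz_atE:
  assumes "locally_lipschitz_at f xb"
  obtains K where "K > 0"
    "\<forall>\<^sub>F (y, z) in nhds (xb, xb). \<bar>f y - f z\<bar> \<le> K * norm (y - z)"
proof -
  obtain K \<delta> where "\<delta> > 0" and L: "\<forall>y\<in>ball xb \<delta>. \<forall>z\<in>ball xb \<delta>. \<bar>f y - f z\<bar> \<le> K * norm (y - z)"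
    using assms unfolding locally_lipschitz_at_def by blast
  have "\<forall>\<^sub>F yz in nhds (xb, xb). yz \<in> ball xb \<delta> \<times> ball xb \<delta>"
    using \<open>\<delta> > 0\<close> by (intro eventually_nhds_in_open open_Times) auto
  moreover have "\<bar>f y - f z\<bar> \<le> (\<bar>K\<bar> + 1) * norm (y - z)"
    if "y \<in> ball xb \<delta>" "z \<in> ball xb \<delta>" for y z
  proof -
    have "\<bar>f y - f z\<bar> \<le> K * norm (y - z)" using L that by auto
    also have "\<dots> \<le> (\<bar>K\<bar> + 1) * norm (y - z)" by (intro mult_right_mono) auto
    finally show ?thesis .
  qed
  ultimately have "\<forall>\<^sub>F (y, z) in nhds (xb, xb). \<bar>f y - f z\<bar> \<le> (\<bar>K\<bar> + 1) * norm (y - z)"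
    by (auto elim!: eventually_mono)
  then show thesis using that[of "\<bar>K\<bar> + 1"] by auto
qed

lemma eventually_lipschitz_along:
  assumes "\<forall>\<^sub>F (y, z) in nhds (xb, xb). \<bar>f y - f z\<bar> \<le> K * norm (y - z)"
    and "(a \<longlongrightarrow> xb) F" "(b \<longlongrightarrow> xb) F"
  shows "\<forall>\<^sub>F x in F. \<bar>f (a x) - f (b x)\<bar> \<le> K * norm (a x - b x)"
  using eventually_compose_filterlim[OF assms(1) tendsto_Pair[OF assms(2,3)]] by simp

lemma Limsup_difference_quotient_le_lipschitz:
  fixes f :: "'a::real_normed_vector \<Rightarrow> real"
  assumes "K > 0" "\<forall>\<^sub>F (y, z) in nhds (xb, xb). \<bar>f y - f z\<bar> \<le> K * norm (y - z)"
  shows "Limsup (nhds xb \<times>\<^sub>F at_right 0) (\<lambda>(x, t). ereal ((f (x + t *\<^sub>R w) - f x) / t))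
           \<le> ereal (K * norm w)"
proof -
  let ?F = "nhds xb \<times>\<^sub>F at_right (0::real)"
  have "(snd \<longlongrightarrow> 0) ?F"
    by (rule filterlim_mono[OF filterlim_snd[of "at_right 0" "nhds xb"]]) (simp_all add: at_within_le_nhds)
  then have "((\<lambda>(x, t). x + t *\<^sub>R w) \<longlongrightarrow> xb + 0 *\<^sub>R w) ?F"
    unfolding case_prod_beta' by (intro tendsto_intros filterlim_fst)
  from eventually_lipschitz_along[OF assms(2) this[simplified] filterlim_fst]
  have "\<forall>\<^sub>F (x, t) in ?F. \<bar>f (x + t *\<^sub>R w) - f x\<bar> \<le> K * (\<bar>t\<bar> * norm w)"
    by (simp add: case_prod_beta')
  moreover have "\<forall>\<^sub>F (x, t) in ?F. t > 0"
    using eventually_compose_filterlim[OF eventually_at_right_less filterlim_snd]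
    by (simp add: case_prod_beta')
  ultimately have "\<forall>\<^sub>F (x, t) in ?F. ereal ((f (x + t *\<^sub>R w) - f x) / t) \<le> ereal (K * norm w)"
    by eventually_elim (auto simp: divide_le_eq abs_le_iff algebra_simps)
  then show ?thesis by (intro Limsup_bounded) (simp add: case_prod_beta')
qed

lemma eventually_difference_quotient_less:
  fixes f :: "'a::real_normed_vector \<Rightarrow> real"
  assumes lip: "locally_lipschitz_at f xb" and less: "clarke1 f xb w < r"
  shows "\<forall>\<^sub>F (x, t) in nhds xb \<times>\<^sub>F at_right 0. (f (x + t *\<^sub>R w) - f x) / t < r"
proof -
  let ?L = "Limsup (nhds xb \<times>\<^sub>F at_right 0) (\<lambda>(x, t). ereal ((f (x + t *\<^sub>R w) - f x) / t))"
  obtain K where "K > 0" "\<forall>\<^sub>F (y, z) in nhds (xb, xb). \<bar>f y - f z\<bar> \<le> K * norm (y - z)"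
    using locally_lipschitz_atE[OF lip] .
  then have "?L \<le> ereal (K * norm w)"
    by (rule Limsup_difference_quotient_le_lipschitz)
  \<comment> \<open>The bound excludes \<open>?L = \<infinity>\<close>, where \<open>real_of_ereal\<close> would report \<open>clarke1 f xb w = 0\<close>.\<close>
  then have "?L < ereal r"
    using less by (cases ?L) (auto simp: clarke1_def)
  from Limsup_lessD[OF this] show ?thesis
    by (rule eventually_mono) (auto simp: split_beta)
qed

lemma tendsto_second_order_curve:
  fixes u v :: "'a::real_normed_vector"
  assumes "(t \<longlongrightarrow> 0) F" "(vs \<longlongrightarrow> v) F"
  shows "((\<lambda>k. xb + t k *\<^sub>R u + ((1/2) * (t k)\<^sup>2) *\<^sub>R vs k) \<longlongrightarrow> xb) F"
  using assms by (auto intro!: tendsto_eq_intros)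

lemma eventually_first_order_descent:
  fixes f :: "'a::real_normed_vector \<Rightarrow> real"
  assumes lip: "locally_lipschitz_at f xb" and neg: "clarke1 f xb u < 0"
  shows "\<forall>\<^sub>F \<tau> in at_right 0. f (xb + \<tau> *\<^sub>R u + ((1/2) * \<tau>\<^sup>2) *\<^sub>R v) < f xb - (1/2) * \<tau>\<^sup>2"
proof -
  define c where "c = clarke1 f xb u"
  obtain K where "K > 0" and K: "\<forall>\<^sub>F (y, z) in nhds (xb, xb). \<bar>f y - f z\<bar> \<le> K * norm (y - z)"
    using locally_lipschitz_atE[OF lip] .
  have "\<forall>\<^sub>F (x, t) in nhds xb \<times>\<^sub>F at_right 0. (f (x + t *\<^sub>R u) - f x) / t < c / 2"
    using neg by (intro eventually_difference_quotient_less lip) (simp add: c_def)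
  from eventually_compose_filterlim[OF this filterlim_Pair[OF tendsto_const filterlim_ident]]
  have quotient: "\<forall>\<^sub>F \<tau> in at_right 0. (f (xb + \<tau> *\<^sub>R u) - f xb) / \<tau> < c / 2"
    by simp
  have "((\<lambda>\<tau>. xb + \<tau> *\<^sub>R u + ((1/2) * \<tau>\<^sup>2) *\<^sub>R v) \<longlongrightarrow> xb) (at_right 0)"
    by (rule tendsto_second_order_curve) auto
  moreover have "((\<lambda>\<tau>. xb + \<tau> *\<^sub>R u) \<longlongrightarrow> xb) (at_right 0)"
    by (auto intro!: tendsto_eq_intros)
  ultimately have second_order_term:
    "\<forall>\<^sub>F \<tau> in at_right 0. \<bar>f (xb + \<tau> *\<^sub>R u + ((1/2) * \<tau>\<^sup>2) *\<^sub>R v) - f (xb + \<tau> *\<^sub>R u)\<bar>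
       \<le> K * ((1/2) * \<tau>\<^sup>2 * norm v)"
    using eventually_lipschitz_along[OF K] by fastforce
  have "((\<lambda>\<tau>::real. \<tau> * (K * norm v + 1)) \<longlongrightarrow> 0) (at_right 0)"
    by (auto intro!: tendsto_eq_intros)
  then have small: "\<forall>\<^sub>F \<tau> in at_right 0. \<tau> * (K * norm v + 1) < - c"
    using neg by (intro order_tendstoD(2)) (auto simp: c_def)
  show ?thesis
    using quotient second_order_term small eventually_at_right_less
  proof eventually_elim
    case (elim \<tau>)
    then have "f (xb + \<tau> *\<^sub>R u) - f xb < \<tau> * (c / 2)"
      by (simp add: divide_less_eq mult.commute)
    moreover have "f (xb + \<tau> *\<^sub>R u + ((1/2) * \<tau>\<^sup>2) *\<^sub>R v) - f (xb + \<tau> *\<^sub>R u) \<le> K * ((1/2) * \<tau>\<^sup>2 * norm v)"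
      using elim by linarith
    moreover have "\<tau> * (c / 2) + K * ((1/2) * \<tau>\<^sup>2 * norm v) + (1/2) * \<tau>\<^sup>2
        = (\<tau> / 2) * (c + \<tau> * (K * norm v + 1))"
      by (simp add: power2_eq_square algebra_simps)
    moreover have "(\<tau> / 2) * (c + \<tau> * (K * norm v + 1)) < 0"
      using elim by (intro mult_pos_neg) auto
    ultimately show ?case by linarith
  qed
qed

lemma eventually_second_order_descent:
  fixes f :: "'a::real_normed_vector \<Rightarrow> real"
  assumes lip: "locally_lipschitz_at f xb" and flat: "clarke1 f xb u = 0"
    and neg: "ereal (clarke1 f xb v) + clarke2 f xb u < 0"
  obtains \<epsilon> where "\<epsilon> > 0"
    "\<forall>\<^sub>F \<tau> in at_right 0. f (xb + \<tau> *\<^sub>R u + ((1/2) * \<tau>\<^sup>2) *\<^sub>R v) < f xb - \<epsilon> * ((1/2) * \<tau>\<^sup>2)"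
proof -
  define d where "d = clarke1 f xb v"
  obtain r where r: "clarke2 f xb u < ereal r" and "d + r < 0"
  proof (cases "clarke2 f xb u")
    case (real r0)
    then show thesis using neg that[of "(r0 - d) / 2"] by (auto simp: d_def field_simps)
  next
    case PInf
    then show thesis using neg by simp
  next
    case MInf
    then show thesis using that[of "- d - 1"] by simp
  qed
  define \<epsilon> where "\<epsilon> = - (d + r) / 2"
  have "\<epsilon> > 0" using \<open>d + r < 0\<close> by (simp add: \<epsilon>_def)
  from Limsup_lessD[OF r[unfolded clarke2_def]]
  have first_order_part: "\<forall>\<^sub>F \<tau> in at_right 0. (f (xb + \<tau> *\<^sub>R u) - f xb) / ((1/2) * \<tau>\<^sup>2) < r"
    by (simp add: flat)
  have "\<forall>\<^sub>F (x, t) in nhds xb \<times>\<^sub>F at_right 0. (f (x + t *\<^sub>R v) - f x) / t < d + \<epsilon>"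
    using \<open>\<epsilon> > 0\<close> by (intro eventually_difference_quotient_less lip) (simp add: d_def)
  moreover have "filterlim (\<lambda>\<tau>::real. (xb + \<tau> *\<^sub>R u, (1/2) * \<tau>\<^sup>2)) (nhds xb \<times>\<^sub>F at_right 0) (at_right 0)"
  proof (rule filterlim_Pair)
    show "((\<lambda>\<tau>::real. xb + \<tau> *\<^sub>R u) \<longlongrightarrow> xb) (at_right 0)"
      by (auto intro!: tendsto_eq_intros)
    have "((\<lambda>\<tau>::real. (1/2) * \<tau>\<^sup>2) \<longlongrightarrow> 0) (at_right 0)"
      by (auto intro!: tendsto_eq_intros)
    moreover have "\<forall>\<^sub>F \<tau> in at_right 0. (1/2) * \<tau>\<^sup>2 \<in> {0::real<..} \<and> (1/2) * \<tau>\<^sup>2 \<noteq> 0"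
      using eventually_at_right_less by (rule eventually_mono) auto
    ultimately show "filterlim (\<lambda>\<tau>::real. (1/2) * \<tau>\<^sup>2) (at_right 0) (at_right 0)"
      unfolding filterlim_at by auto
  qed
  ultimately have second_order_part: "\<forall>\<^sub>F \<tau> in at_right 0.
      (f (xb + \<tau> *\<^sub>R u + ((1/2) * \<tau>\<^sup>2) *\<^sub>R v) - f (xb + \<tau> *\<^sub>R u)) / ((1/2) * \<tau>\<^sup>2) < d + \<epsilon>"
    by (auto dest: eventually_compose_filterlim)
  have "\<forall>\<^sub>F \<tau> in at_right 0. f (xb + \<tau> *\<^sub>R u + ((1/2) * \<tau>\<^sup>2) *\<^sub>R v) < f xb - \<epsilon> * ((1/2) * \<tau>\<^sup>2)"
    using first_order_part second_order_part eventually_at_right_less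
  proof eventually_elim
    case (elim \<tau>)
    define s where "s = (1/2) * \<tau>\<^sup>2"
    have "s > 0" using elim by (simp add: s_def)
    then have "f (xb + \<tau> *\<^sub>R u) - f xb < s * r"
      and "f (xb + \<tau> *\<^sub>R u + s *\<^sub>R v) - f (xb + \<tau> *\<^sub>R u) < s * (d + \<epsilon>)"
      using elim by (simp_all add: s_def divide_less_eq mult.commute)
    moreover have "s * r + s * (d + \<epsilon>) = - \<epsilon> * s" by (simp add: \<epsilon>_def field_simps)
    ultimately show ?case by (simp add: s_def)
  qed
  with \<open>\<epsilon> > 0\<close> show thesis by (rule that)
qed

lemma eventually_lipschitz_perturbation:
  fixes f :: "'a::real_normed_vector \<Rightarrow> real"
  assumes lip: "locally_lipschitz_at f xb"
    and t: "(t \<longlongrightarrow> 0) F" and vs: "(vs \<longlongrightarrow> v) F" and "\<epsilon> > 0"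
  shows "\<forall>\<^sub>F k in F. f (xb + t k *\<^sub>R u + ((1/2) * (t k)\<^sup>2) *\<^sub>R vs k)
           \<le> f (xb + t k *\<^sub>R u + ((1/2) * (t k)\<^sup>2) *\<^sub>R v) + \<epsilon> * ((1/2) * (t k)\<^sup>2)"
proof -
  obtain K where "K > 0" and K: "\<forall>\<^sub>F (y, z) in nhds (xb, xb). \<bar>f y - f z\<bar> \<le> K * norm (y - z)"
    using locally_lipschitz_atE[OF lip] .
  note curves = tendsto_second_order_curve[where u=u, OF t vs] tendsto_second_order_curve[where u=u, OF t tendsto_const[of v]]
  have "\<forall>\<^sub>F k in F. norm (vs k - v) < \<epsilon> / K"
    using tendstoD[OF vs] \<open>\<epsilon> > 0\<close> \<open>K > 0\<close> by (simp add: dist_norm)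
  with eventually_lipschitz_along[OF K curves] show ?thesis
  proof eventually_elim
    case (elim k)
    define s where "s = (1/2) * (t k)\<^sup>2"
    have "s \<ge> 0" by (simp add: s_def)
    have "f (xb + t k *\<^sub>R u + s *\<^sub>R vs k) - f (xb + t k *\<^sub>R u + s *\<^sub>R v)
        \<le> \<bar>f (xb + t k *\<^sub>R u + s *\<^sub>R vs k) - f (xb + t k *\<^sub>R u + s *\<^sub>R v)\<bar>"
      by simp
    also have "\<dots> \<le> K * norm ((xb + t k *\<^sub>R u + s *\<^sub>R vs k) - (xb + t k *\<^sub>R u + s *\<^sub>R v))"
      using elim by (simp add: s_def)
    also have "norm ((xb + t k *\<^sub>R u + s *\<^sub>R vs k) - (xb + t k *\<^sub>R u + s *\<^sub>R v)) = s * norm (vs k - v)"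
      using \<open>s \<ge> 0\<close> by (simp flip: scaleR_diff_right)
    also have "K * (s * norm (vs k - v)) = s * (norm (vs k - v) * K)"
      by simp
    also have "\<dots> \<le> s * \<epsilon>"
      using elim \<open>s \<ge> 0\<close> \<open>K > 0\<close> by (intro mult_left_mono) (simp_all add: pos_less_divide_eq)
    finally show ?case by (simp add: s_def algebra_simps)
  qed
qed

lemma eventually_descent_along_second_order_curve:
  fixes f :: "'a::real_normed_vector \<Rightarrow> real"
  assumes lip: "locally_lipschitz_at f xb" and descent_pair: "lex_less (second_pair f xb u v) (0, 0)"
    and t: "filterlim t (at_right 0) F" and vs: "(vs \<longlongrightarrow> v) F"
  shows "\<forall>\<^sub>F k in F. f (xb + t k *\<^sub>R u + ((1/2) * (t k)\<^sup>2) *\<^sub>R vs k) < f xb"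
proof -
  obtain \<epsilon> where "\<epsilon> > 0" and descent:
    "\<forall>\<^sub>F \<tau> in at_right 0. f (xb + \<tau> *\<^sub>R u + ((1/2) * \<tau>\<^sup>2) *\<^sub>R v) < f xb - \<epsilon> * ((1/2) * \<tau>\<^sup>2)"
  proof -
    have "clarke1 f xb u < 0 \<or> (clarke1 f xb u = 0 \<and> ereal (clarke1 f xb v) + clarke2 f xb u < 0)"
      using descent_pair by (simp add: lex_less_def second_pair_def)
    then show thesis
    proof
      assume "clarke1 f xb u < 0"
      from eventually_first_order_descent[OF lip this] show thesis
        using that[of 1] by simp
    qed (use eventually_second_order_descent[OF lip] that in blast)
  qed
  have "(t \<longlongrightarrow> 0) F" using t by (simp add: filterlim_at)
  from eventually_compose_filterlim[OF descent t] eventually_lipschitz_perturbation[where u=u, OF lip this vs \<open>\<epsilon> > 0\<close>]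
  show ?thesis by eventually_elim linarith
qed

lemma clarke1_zero_dir: "clarke1 f xb 0 = 0"
  by (simp add: clarke1_def prod_filter_eq_bot Limsup_const case_prod_beta')

lemma clarke2_zero_dir: "clarke2 f xb 0 = 0"
  by (simp add: clarke2_def clarke1_zero_dir zero_ereal_def Limsup_const)

lemma second_pair_zero_dir: "second_pair f xb 0 w = (0, ereal (clarke1 f xb w))"
  by (simp add: second_pair_def clarke1_zero_dir clarke2_zero_dir)

lemma obtain_critical_descent_pair:
  assumes "{1..p} \<noteq> {}"
    and F: "\<forall>i\<in>{1..p}. lex_less (second_pair (f i) xb u v) (0, 0)"
    and G: "\<forall>j\<in>active_set m g xb. lex_le (second_pair (g j) xb u v) (0, 0)"
  obtains u' v' where "u' \<in> critical_dirs p m f g xb"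
    "\<forall>i\<in>{1..p}. lex_less (second_pair (f i) xb u' v') (0, 0)"
    "\<forall>j\<in>active_set m g xb. lex_le (second_pair (g j) xb u' v') (0, 0)"
proof (cases "u \<in> critical_dirs p m f g xb")
  case True
  with F G show thesis by (intro that)
next
  case False
  have "\<forall>i\<in>{1..p}. clarke1 (f i) xb u \<le> 0" "\<forall>j\<in>active_set m g xb. clarke1 (g j) xb u \<le> 0"
    using F G by (auto simp: lex_less_def lex_le_def second_pair_def)
  with False have "\<forall>i\<in>{1..p}. clarke1 (f i) xb u < 0"
    unfolding critical_dirs_def by force
  moreover have "0 \<in> critical_dirs p m f g xb"
    using \<open>{1..p} \<noteq> {}\<close> by (auto simp: critical_dirs_def clarke1_zero_dir)
  ultimately show thesis
    using \<open>\<forall>j\<in>active_set m g xb. clarke1 (g j) xb u \<le> 0\<close>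
    by (intro that[of 0 u]) (auto simp: second_pair_zero_dir lex_less_def lex_le_def)
qed

theorem theorem4p2:
  fixes p m :: nat and f g :: "nat \<Rightarrow> 'a::banach \<Rightarrow> real" and xb :: 'a
  assumes xb_feas: "xb \<in> feasible_set m g"
    and f_lip: "\<forall>i\<in>{1..p}. locally_lipschitz_at (f i) xb"
    and g_lip: "\<forall>j\<in>active_set m g xb. locally_lipschitz_at (g j) xb"
    and g_cont: "\<forall>j\<in>{1..m} - active_set m g xb. continuous (at xb) (g j)"
    and lwe: "local_weak_efficient p m f g xb"
    and cq: "\<forall>u\<in>critical_dirs p m f g xb.
               L2 p m f g xb u \<subseteq> T2 (feasible_set m g) xb u"
  shows "\<not> (\<exists>u v. (\<forall>i\<in>{1..p}. lex_less (second_pair (f i) xb u v) (0, 0)) \<and>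
                 (\<forall>j\<in>active_set m g xb. lex_le (second_pair (g j) xb u v) (0, 0)))"
proof
  obtain U where "open U" "xb \<in> U"
    and no_better: "\<not> (\<exists>x\<in>U \<inter> feasible_set m g. \<forall>i\<in>{1..p}. f i x < f i xb)"
    using lwe unfolding local_weak_efficient_def by blast
  with xb_feas have "{1..p} \<noteq> {}" by auto
  assume "\<exists>u v. (\<forall>i\<in>{1..p}. lex_less (second_pair (f i) xb u v) (0, 0)) \<and>
                 (\<forall>j\<in>active_set m g xb. lex_le (second_pair (g j) xb u v) (0, 0))"
  then obtain u v where "u \<in> critical_dirs p m f g xb"
    and F: "\<forall>i\<in>{1..p}. lex_less (second_pair (f i) xb u v) (0, 0)"
    and G: "\<forall>j\<in>active_set m g xb. lex_le (second_pair (g j) xb u v) (0, 0)"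
    using obtain_critical_descent_pair[OF \<open>{1..p} \<noteq> {}\<close>] by metis
  have "v \<in> L2 p m f g xb u"
    using F G by (auto simp: L2_def lex_less_def lex_le_def)
  with cq \<open>u \<in> critical_dirs p m f g xb\<close> have "v \<in> T2 (feasible_set m g) xb u" by blast
  then obtain t vs where "\<forall>k. t k > 0" "t \<longlonglongrightarrow> 0" "vs \<longlonglongrightarrow> v"
    and feasible: "\<forall>k. xb + t k *\<^sub>R u + ((1/2) * (t k)\<^sup>2) *\<^sub>R vs k \<in> feasible_set m g"
    unfolding T2_def by blast
  then have "filterlim t (at_right 0) sequentially"
    by (auto simp: filterlim_at less_imp_neq[symmetric])
  with F f_lip \<open>vs \<longlonglongrightarrow> v\<close> have "\<forall>i\<in>{1..p}. \<forall>\<^sub>F k in sequentially.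
      f i (xb + t k *\<^sub>R u + ((1/2) * (t k)\<^sup>2) *\<^sub>R vs k) < f i xb"
    by (blast intro: eventually_descent_along_second_order_curve)
  moreover have "\<forall>\<^sub>F k in sequentially. xb + t k *\<^sub>R u + ((1/2) * (t k)\<^sup>2) *\<^sub>R vs k \<in> U"
    using tendsto_second_order_curve[OF \<open>t \<longlonglongrightarrow> 0\<close> \<open>vs \<longlonglongrightarrow> v\<close>] \<open>open U\<close> \<open>xb \<in> U\<close>
    by (rule topological_tendstoD)
  ultimately have "\<forall>\<^sub>F k in sequentially. xb + t k *\<^sub>R u + ((1/2) * (t k)\<^sup>2) *\<^sub>R vs k \<in> U \<and>
      (\<forall>i\<in>{1..p}. f i (xb + t k *\<^sub>R u + ((1/2) * (t k)\<^sup>2) *\<^sub>R vs k) < f i xb)"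
    by (simp add: eventually_ball_finite eventually_conj_iff)
  then obtain k where "xb + t k *\<^sub>R u + ((1/2) * (t k)\<^sup>2) *\<^sub>R vs k \<in> U"
    "\<forall>i\<in>{1..p}. f i (xb + t k *\<^sub>R u + ((1/2) * (t k)\<^sup>2) *\<^sub>R vs k) < f i xb"
    by (auto simp: eventually_sequentially)
  with no_better feasible show False by blast
qed

end
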